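(* Let $\Lambda\subset\mathbb{R}^2$ be a $2$-dimensional lattice and let $C\subset\mathbb{R}^2$ be a convex body that is lattice reduced or lattice complete with respect to $\Lambda$. Then $\mathrm{diam}_\Lambda(C)\le\mathrm{wdt}_\Lambda(C)$.
   Context: A lattice $\Lambda\subset\mathbb{R}^2$ is a discrete subgroup spanning $\mathbb{R}^2$; $\Lambda^\star=\{y: x\cdot y\in\mathbb{Z}\ \forall x\in\Lambda\}$. For a convex body $C$ (compact convex, non-empty interior): $\mathrm{wdt}_\Lambda(C)=\min_{y\in\Lambda^\star\setminus\{0\}}\max_{a,b\in C}y\cdot(a-b)$; a segment $[a,b]$ is a lattice segment if $b-a$ is parallel to a nonzero vector of $\Lambda$, with lattice length $|b-a|/|v|$ where $v$ generates $\Lambda\cap\mathrm{span}\{b-a\}$ and is a positive multiple of $b-a$; $\mathrm{diam}_\Lambda(C)$ is the maximum lattice length of a lattice segment in $C$. $C$ is lattice reduced if no convex body $C'\subsetneq C$ has the same lattice width, lattice complete if no convex body $C'\supsetneq C$ has the same lattice diameter. *)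

theory Defs
  imports "HOL-Analysis.Analysis"
begin

type_synonym pt = "real^2"

definition is_lattice :: "pt set \<Rightarrow> bool" where
  "is_lattice L \<longleftrightarrow>
     0 \<in> L \<and> (\<forall>x\<in>L. \<forall>y\<in>L. x + y \<in> L) \<and> (\<forall>x\<in>L. - x \<in> L) \<and>
     (\<forall>x\<in>L. \<exists>e>0. \<forall>y\<in>L. y \<noteq> x \<longrightarrow> dist y x \<ge> e) \<and>
     span L = UNIV"

definition dual_lattice :: "pt set \<Rightarrow> pt set" where
  "dual_lattice L = {y. \<forall>x\<in>L. x \<bullet> y \<in> \<int>}"

definition convex_body :: "pt set \<Rightarrow> bool" where
  "convex_body C \<longleftrightarrow> compact C \<and> convex C \<and> interior C \<noteq> {}"

definition lattice_width :: "pt set \<Rightarrow> pt set \<Rightarrow> real" where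
  "lattice_width L C =
     Inf ((\<lambda>y. Sup {y \<bullet> (a - b) | a b. a \<in> C \<and> b \<in> C}) ` (dual_lattice L - {0}))"

definition lattice_segment :: "pt set \<Rightarrow> pt \<Rightarrow> pt \<Rightarrow> bool" where
  "lattice_segment L a b \<longleftrightarrow> a \<noteq> b \<and> (\<exists>v\<in>L. v \<noteq> 0 \<and> (\<exists>c. b - a = c *\<^sub>R v))"

definition primitive_vec :: "pt set \<Rightarrow> pt \<Rightarrow> pt" where
  "primitive_vec L d = (SOME v. v \<in> L \<and> v \<noteq> 0 \<and> (\<exists>c>0. v = c *\<^sub>R d) \<and>
        L \<inter> span {d} = range (\<lambda>k::int. of_int k *\<^sub>R v))"

definition lattice_length :: "pt set \<Rightarrow> pt \<Rightarrow> pt \<Rightarrow> real" where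
  "lattice_length L a b = norm (b - a) / norm (primitive_vec L (b - a))"

definition lattice_diam :: "pt set \<Rightarrow> pt set \<Rightarrow> real" where
  "lattice_diam L C =
     Sup {lattice_length L a b | a b. lattice_segment L a b \<and> closed_segment a b \<subseteq> C}"

definition lattice_reduced :: "pt set \<Rightarrow> pt set \<Rightarrow> bool" where
  "lattice_reduced L C \<longleftrightarrow>
     (\<forall>C'. convex_body C' \<and> C' \<subset> C \<longrightarrow> lattice_width L C' \<noteq> lattice_width L C)"

definition lattice_complete :: "pt set \<Rightarrow> pt set \<Rightarrow> bool" where
  "lattice_complete L C \<longleftrightarrow>
     (\<forall>C'. convex_body C' \<and> C \<subset> C' \<longrightarrow> lattice_diam L C' \<noteq> lattice_diam L C)"

end

theory Submission
  imports Defs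
begin

(*
  Suppose wdt(C) < diam(C). Take a lattice segment [a, b] in C that is longer than the width
  and a dual vector y0 in whose direction C is narrower than [a, b]. A lattice segment of
  lattice length l has width at least l in every dual direction not orthogonal to it, because
  the primitive vector v of its direction satisfies |y . v| >= 1. Hence y0 is orthogonal to
  b - a, and in the plane the only such dual directions are the multiples of y0.

  C is not reduced: for a centre c in the interior and t < 1 close to 1, the convex hull of the
  homothetic copy c + t (C - c) and of two points p, q realising the width in direction y0 is
  a proper convex subbody. The copy keeps width at least t l >= wdt(C) in every direction not
  orthogonal to b - a, and the chord [p, q] keeps the width in the multiples of y0.

  C is not complete: let mu v be the longest chord of C in direction v. A supporting
  hyperplane of the difference body C - C at mu v gives a linear form f bounding every chord
  in direction v by mu, also in the sweep C + [0, e] for e orthogonal to f. For e small the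
  width of C + [0, e] in direction y0 stays below diam(C), so C + [0, e] is a strictly larger
  body with the same lattice diameter.
*)

section \<open>Lattices and primitive vectors\<close>

lemma is_lattice_zero: "is_lattice L \<Longrightarrow> 0 \<in> L"
  by (simp add: is_lattice_def)

lemma is_lattice_add: "is_lattice L \<Longrightarrow> x \<in> L \<Longrightarrow> y \<in> L \<Longrightarrow> x + y \<in> L"
  by (simp add: is_lattice_def)

lemma is_lattice_uminus: "is_lattice L \<Longrightarrow> x \<in> L \<Longrightarrow> - x \<in> L"
  by (simp add: is_lattice_def)

lemma is_lattice_diff: "is_lattice L \<Longrightarrow> x \<in> L \<Longrightarrow> y \<in> L \<Longrightarrow> x - y \<in> L"
  using is_lattice_add[of L x "- y"] is_lattice_uminus[of L y] by simp

lemma is_lattice_scaleR_of_nat: "is_lattice L \<Longrightarrow> x \<in> L \<Longrightarrow> of_nat n *\<^sub>R x \<in> L"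
  by (induction n) (simp_all add: is_lattice_zero is_lattice_add algebra_simps)

lemma is_lattice_scaleR_of_int:
  assumes "is_lattice L" "x \<in> L" shows "of_int k *\<^sub>R x \<in> L"
proof (cases k rule: int_cases)
  case (nonneg n)
  then show ?thesis using is_lattice_scaleR_of_nat[OF assms] by simp
next
  case (neg n)
  then have "of_int k = - real (Suc n)" by simp
  then have "of_int k *\<^sub>R x = - (of_nat (Suc n) *\<^sub>R x)" by (simp only: scaleR_minus_left)
  then show ?thesis
    using is_lattice_uminus[OF assms(1) is_lattice_scaleR_of_nat[OF assms]] by metis
qed

lemma is_lattice_discrete:
  assumes "is_lattice L"
  obtains e where "e > 0" "\<And>x. x \<in> L \<Longrightarrow> x \<noteq> 0 \<Longrightarrow> e \<le> norm x"
proof -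
  obtain e where "e > 0" "\<forall>y\<in>L. y \<noteq> 0 \<longrightarrow> dist y 0 \<ge> e"
    using assms is_lattice_zero[OF assms] unfolding is_lattice_def by blast
  then show thesis using that by simp
qed

lemma is_lattice_finite_Int_bounded:
  assumes L: "is_lattice L" and "bounded S"
  shows "finite (L \<inter> S)"
proof (rule ccontr)
  assume inf: "infinite (L \<inter> S)"
  obtain e where e: "e > 0" "\<And>x. x \<in> L \<Longrightarrow> x \<noteq> 0 \<Longrightarrow> e \<le> norm x"
    using is_lattice_discrete[OF L] by blast
  have "bounded (L \<inter> S)" using assms(2) bounded_subset by blast
  then obtain x where x: "x islimpt (L \<inter> S)"
    using bounded_infinite_imp_islimpt[OF order_refl _ inf] by blast
  then obtain y1 where y1: "y1 \<in> L \<inter> S" "y1 \<noteq> x" "dist y1 x < e/2"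
    using e(1) unfolding islimpt_approachable by (meson half_gt_zero)
  then obtain y2 where y2: "y2 \<in> L \<inter> S" "y2 \<noteq> x" "dist y2 x < min (e/2) (dist y1 x)"
    using x e(1) unfolding islimpt_approachable
    by (metis half_gt_zero min_less_iff_conj zero_less_dist_iff)
  have "y1 - y2 \<in> L" "y1 - y2 \<noteq> 0" using y1 y2 is_lattice_diff[OF L] by auto
  moreover have "norm (y1 - y2) < e"
    using y1 y2 dist_triangle_half_l[of y1 x e y2] by (simp add: dist_norm dist_commute)
  ultimately show False using e(2) by fastforce
qed

lemma is_lattice_shortest_nonzero:
  assumes L: "is_lattice L" and u: "u \<in> L \<inter> S" "u \<noteq> 0"
  obtains v where "v \<in> L \<inter> S" "v \<noteq> 0" "\<And>x. x \<in> L \<inter> S \<Longrightarrow> x \<noteq> 0 \<Longrightarrow> norm v \<le> norm x"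
proof -
  define F where "F = L \<inter> (S \<inter> cball 0 (norm u)) - {0}"
  have "finite F"
    unfolding F_def using is_lattice_finite_Int_bounded[OF L] by (simp add: bounded_Int)
  moreover have "u \<in> F" unfolding F_def using u by simp
  ultimately obtain v where v: "v \<in> F" "\<And>x. x \<in> F \<Longrightarrow> norm v \<le> norm x"
    using arg_min_if_finite[of F norm] by (metis empty_iff not_less)
  show thesis
  proof (rule that)
    show "v \<in> L \<inter> S" "v \<noteq> 0" using v(1) unfolding F_def by auto
    fix x assume "x \<in> L \<inter> S" "x \<noteq> 0"
    then show "norm v \<le> norm x"
      using v(2)[of x] v(2)[OF \<open>u \<in> F\<close>] unfolding F_def by force
  qed
qed

definition is_primitive :: "pt set \<Rightarrow> pt \<Rightarrow> pt \<Rightarrow> bool" where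
  "is_primitive L d v \<longleftrightarrow> v \<in> L \<and> v \<noteq> 0 \<and> (\<exists>c>0. v = c *\<^sub>R d) \<and>
     L \<inter> span {d} = range (\<lambda>k::int. of_int k *\<^sub>R v)"

lemma is_primitive_exists:
  assumes L: "is_lattice L" and u: "u \<in> L" "u \<noteq> 0" "u \<in> span {d}"
  shows "\<exists>v. is_primitive L d v"
proof -
  obtain v0 where v0: "v0 \<in> L \<inter> span {d}" "v0 \<noteq> 0"
    and shortest: "\<And>x. x \<in> L \<inter> span {d} \<Longrightarrow> x \<noteq> 0 \<Longrightarrow> norm v0 \<le> norm x"
    using is_lattice_shortest_nonzero[OF L, of u "span {d}"] u by blast
  then obtain t where t: "v0 = t *\<^sub>R d" by (auto simp: span_singleton)
  with v0 have "t \<noteq> 0" by auto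
  define v where "v = \<bar>t\<bar> *\<^sub>R d"
  have "v = v0 \<or> v = - v0" unfolding v_def t by (simp add: abs_if)
  then have vL: "v \<in> L" and norm_v: "norm v = norm v0"
    using v0 is_lattice_uminus[OF L] by auto
  have "L \<inter> span {d} = range (\<lambda>k::int. of_int k *\<^sub>R v)"
  proof (intro set_eqI iffI)
    fix x assume x: "x \<in> L \<inter> span {d}"
    then obtain s where "x = s *\<^sub>R d" by (auto simp: span_singleton)
    then have xq: "x = (s / \<bar>t\<bar>) *\<^sub>R v" using \<open>t \<noteq> 0\<close> by (simp add: v_def)
    define r where "r = x - of_int \<lfloor>s / \<bar>t\<bar>\<rfloor> *\<^sub>R v"
    have "r \<in> L"
      unfolding r_def using x is_lattice_diff[OF L] is_lattice_scaleR_of_int[OF L vL] by blast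
    moreover have "r \<in> span {d}"
      unfolding r_def using x by (auto simp: v_def span_diff span_mul span_base)
    moreover have "norm r < norm v0"
    proof -
      have "r = frac (s / \<bar>t\<bar>) *\<^sub>R v" unfolding r_def xq frac_def by (simp add: algebra_simps)
      moreover have "frac (s / \<bar>t\<bar>) < 1" by (rule frac_lt_1)
      ultimately show ?thesis
        using v0(2) norm_v by (simp add: frac_ge_0 mult_less_cancel_right1 less_le)
    qed
    ultimately have "r = 0" using shortest by fastforce
    then show "x \<in> range (\<lambda>k::int. of_int k *\<^sub>R v)" unfolding r_def by auto
  next
    fix x assume "x \<in> range (\<lambda>k::int. of_int k *\<^sub>R v)"
    then show "x \<in> L \<inter> span {d}"
      using is_lattice_scaleR_of_int[OF L vL] by (auto simp: v_def span_mul span_base)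
  qed
  moreover have "v \<noteq> 0" using norm_v v0(2) by auto
  moreover have "\<exists>c>0. v = c *\<^sub>R d" using \<open>t \<noteq> 0\<close> unfolding v_def by (intro exI[of _ "\<bar>t\<bar>"]) auto
  ultimately show ?thesis using vL unfolding is_primitive_def by blast
qed

lemma is_primitive_primitive_vec:
  assumes "is_lattice L" "u \<in> L" "u \<noteq> 0" "u \<in> span {d}"
  shows "is_primitive L d (primitive_vec L d)"
  using is_primitive_exists[OF assms] unfolding primitive_vec_def is_primitive_def[symmetric]
  by (rule someI_ex)

lemma is_primitive_norm_eq:
  assumes "is_primitive L d v" "is_primitive L d' v'" "v \<in> span {d'}" "v' \<in> span {d}"
  shows "norm v = norm v'"
proof -
  obtain k :: int where k: "v' = of_int k *\<^sub>R v"
    using assms(1,2,4) unfolding is_primitive_def by blast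
  obtain k' :: int where k': "v = of_int k' *\<^sub>R v'"
    using assms(1-3) unfolding is_primitive_def by blast
  have "(of_int k' * of_int k) *\<^sub>R v = 1 *\<^sub>R v" using k k' by (metis scaleR_scaleR scaleR_one)
  then have "real_of_int (k' * k) = 1"
    using assms(1) unfolding is_primitive_def scaleR_cancel_right by simp
  then have "k' * k = 1" by linarith
  then have "\<bar>real_of_int k\<bar> = 1" using zmult_eq_1_iff by fastforce
  then show ?thesis using k by simp
qed

lemma is_primitive_lattice_segment:
  assumes L: "is_lattice L" and "lattice_segment L a b"
  shows "is_primitive L (b - a) (primitive_vec L (b - a))"
proof -
  obtain v c where "v \<in> L" "v \<noteq> 0" "b - a = c *\<^sub>R v" "a \<noteq> b"
    using assms(2) unfolding lattice_segment_def by blast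
  then have "v = (1 / c) *\<^sub>R (b - a)" by auto
  then have "v \<in> span {b - a}" by (simp add: span_mul span_base)
  then show ?thesis using is_primitive_primitive_vec[OF L \<open>v \<in> L\<close> \<open>v \<noteq> 0\<close>] by blast
qed

lemma lattice_length_eq_abs:
  assumes L: "is_lattice L" and v: "is_primitive L d v" and "a \<noteq> b" "b - a = t *\<^sub>R v"
  shows "lattice_length L a b = \<bar>t\<bar>"
proof -
  have "t \<noteq> 0" using assms(3,4) by auto
  obtain c where c: "c > 0" "v = c *\<^sub>R d" and vL: "v \<in> L" "v \<noteq> 0"
    using v unfolding is_primitive_def by blast
  have "v = (1 / t) *\<^sub>R (b - a)" using assms(4) \<open>t \<noteq> 0\<close> by simp
  then have v_span: "v \<in> span {b - a}" by (simp add: span_mul span_base)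
  define p where "p = primitive_vec L (b - a)"
  have p: "is_primitive L (b - a) p"
    unfolding p_def using is_primitive_primitive_vec[OF L vL v_span] .
  then obtain c' where "p = c' *\<^sub>R (b - a)" unfolding is_primitive_def by blast
  then have "p = (c' * t * c) *\<^sub>R d" using assms(4) c(2) by simp
  then have "p \<in> span {d}" by (simp add: span_mul span_base)
  then have "norm p = norm v" using is_primitive_norm_eq[OF v p v_span] by simp
  moreover have "lattice_length L a b = norm (b - a) / norm p"
    by (simp add: lattice_length_def p_def)
  ultimately show ?thesis using vL by (simp add: assms(4))
qed

section \<open>The dual lattice is nontrivial\<close>

lemma frac_eq_imp_diff_Ints:
  assumes "frac a = frac b" shows "a - b \<in> \<int>"
proof -
  have "a - b = of_int \<lfloor>a\<rfloor> - of_int \<lfloor>b\<rfloor>" using assms unfolding frac_def by linarith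
  then show ?thesis by (simp add: Ints_diff)
qed

lemma fact_card_mult_in_Ints:
  fixes s :: real
  assumes "finite F" "\<And>k::nat. frac (real k * s) \<in> F"
  shows "real (fact (card F)) * s \<in> \<int>"
proof -
  have "\<not> inj_on (\<lambda>k. frac (real k * s)) {0..card F}"
  proof
    assume "inj_on (\<lambda>k. frac (real k * s)) {0..card F}"
    from card_inj_on_le[OF this _ assms(1)] assms(2) show False by auto
  qed
  then obtain i j where ij: "i < j" "j \<le> card F" "frac (real i * s) = frac (real j * s)"
    unfolding inj_on_def by (metis atLeastAtMost_iff linorder_neqE_nat)
  then have "real (j - i) * s \<in> \<int>"
    using frac_eq_imp_diff_Ints[OF ij(3)[symmetric]] by (simp add: of_nat_diff algebra_simps)
  moreover have "(j - i) dvd fact (card F)" using ij by (intro dvd_fact) auto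
  then obtain q where "fact (card F) = (j - i) * q" by blast
  ultimately show ?thesis
    by (metis Ints_mult Ints_of_nat mult.left_commute mult.right_neutral of_nat_mult)
qed

definition det2 :: "pt \<Rightarrow> pt \<Rightarrow> real" where
  "det2 u v = u$1 * v$2 - u$2 * v$1"

lemma det2_linear_left: "det2 (a *\<^sub>R u + b *\<^sub>R v) w = a * det2 u w + b * det2 v w"
  by (simp add: det2_def algebra_simps)

lemma det2_self [simp]: "det2 u u = 0"
  by (simp add: det2_def)

lemma det2_coordinates:
  assumes "det2 u v \<noteq> 0"
  shows "x = (det2 x v / det2 u v) *\<^sub>R u + (det2 u x / det2 u v) *\<^sub>R v"
proof -
  have "x$i = (det2 x v / det2 u v) * u$i + (det2 u x / det2 u v) * v$i" if "i = 1 \<or> i = 2" for i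
  proof -
    have "det2 x v * u$i + det2 u x * v$i = det2 u v * x$i"
      using that unfolding det2_def by (auto simp: algebra_simps)
    then show ?thesis using assms by (simp add: add_divide_distrib[symmetric])
  qed
  then show ?thesis by (simp add: vec_eq_iff forall_2)
qed

lemma is_lattice_obtain_det2_nonzero:
  assumes L: "is_lattice L"
  obtains u v where "u \<in> L" "v \<in> L" "det2 u v \<noteq> 0"
proof -
  have "\<exists>u\<in>L. \<exists>v\<in>L. det2 u v \<noteq> 0"
  proof (rule ccontr)
    assume degenerate: "\<not> (\<exists>u\<in>L. \<exists>v\<in>L. det2 u v \<noteq> 0)"
    have "u = 0" if "u \<in> L" for u
    proof -
      have "subspace {x. det2 u x = 0}"
        unfolding subspace_def det2_def by (auto simp: algebra_simps)
      moreover have "L \<subseteq> {x. det2 u x = 0}" using degenerate that by auto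
      ultimately have "span L \<subseteq> {x. det2 u x = 0}" by (simp add: span_minimal)
      then have "det2 u (vector [- u$2, u$1]) = 0" using L unfolding is_lattice_def by auto
      then have "u$1 * u$1 + u$2 * u$2 = 0" by (simp add: det2_def)
      then have "u$1 = 0" "u$2 = 0" by (simp_all add: sum_squares_eq_zero_iff)
      then show "u = 0" by (simp add: vec_eq_iff forall_2)
    qed
    then have "span L \<subseteq> {0}" using span_mono[of L "{0}"] by auto
    moreover have "axis 1 (1::real) \<in> span L" using L unfolding is_lattice_def by simp
    ultimately show False by auto
  qed
  then show thesis using that by blast
qed

(* The fractional parts of the coordinates of k x are the coordinates of a lattice point in the
   half-open cell spanned by u and v; there are finitely many such points, so by pigeonhole some
   multiple m x with 1 <= m <= card F has an integral first coordinate. *)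
lemma is_lattice_det2_denominator:
  assumes L: "is_lattice L" and u: "u \<in> L" and v: "v \<in> L" and uv: "det2 u v \<noteq> 0"
  obtains N :: nat where "N > 0" "\<And>x. x \<in> L \<Longrightarrow> real N * (det2 x v / det2 u v) \<in> \<int>"
proof -
  define P where "P = {a *\<^sub>R u + b *\<^sub>R v | a b. 0 \<le> a \<and> a < 1 \<and> 0 \<le> b \<and> b < 1}"
  have "P \<subseteq> cball 0 (norm u + norm v)"
  proof
    fix z assume "z \<in> P"
    then obtain a b where z: "z = a *\<^sub>R u + b *\<^sub>R v" "0 \<le> a" "a < 1" "0 \<le> b" "b < 1"
      unfolding P_def by blast
    have "norm z \<le> a * norm u + b * norm v"
      using z norm_triangle_ineq[of "a *\<^sub>R u" "b *\<^sub>R v"] by simp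
    also have "\<dots> \<le> norm u + norm v"
      using z by (intro add_mono) (auto intro: mult_left_le_one_le)
    finally show "z \<in> cball 0 (norm u + norm v)" by simp
  qed
  then have "finite (L \<inter> P)"
    using is_lattice_finite_Int_bounded[OF L] bounded_subset[OF bounded_cball] by blast
  define F where "F = (\<lambda>z. det2 z v / det2 u v) ` (L \<inter> P)"
  have "finite F" unfolding F_def using \<open>finite (L \<inter> P)\<close> by simp
  have "real (fact (card F)) * (det2 x v / det2 u v) \<in> \<int>" if x: "x \<in> L" for x
  proof (rule fact_card_mult_in_Ints[OF \<open>finite F\<close>])
    fix k :: nat
    define s where "s = det2 x v / det2 u v"
    define t where "t = det2 u x / det2 u v"
    define r where "r = frac (real k * s) *\<^sub>R u + frac (real k * t) *\<^sub>R v"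
    have "x = s *\<^sub>R u + t *\<^sub>R v" unfolding s_def t_def by (rule det2_coordinates[OF uv])
    then have "r = real k *\<^sub>R x - of_int \<lfloor>real k * s\<rfloor> *\<^sub>R u - of_int \<lfloor>real k * t\<rfloor> *\<^sub>R v"
      unfolding r_def frac_def by (simp add: algebra_simps)
    then have "r \<in> L"
      using is_lattice_diff[OF L] is_lattice_scaleR_of_int[OF L] is_lattice_scaleR_of_nat[OF L x]
        u v
      by metis
    moreover have "r \<in> P" using frac_ge_0 frac_lt_1 unfolding P_def r_def by blast
    moreover have "det2 r v / det2 u v = frac (real k * s)"
      using uv by (simp add: r_def det2_linear_left)
    ultimately show "frac (real k * (det2 x v / det2 u v)) \<in> F"
      unfolding F_def s_def by (metis IntI image_eqI)
  qed
  then show thesis using that[of "fact (card F)"] by simp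
qed

lemma dual_lattice_nonzero:
  assumes L: "is_lattice L"
  shows "\<exists>y\<in>dual_lattice L. y \<noteq> 0"
proof -
  obtain u v where uv: "u \<in> L" "v \<in> L" "det2 u v \<noteq> 0"
    using is_lattice_obtain_det2_nonzero[OF L] by blast
  then obtain N :: nat where N: "N > 0" "\<And>x. x \<in> L \<Longrightarrow> real N * (det2 x v / det2 u v) \<in> \<int>"
    using is_lattice_det2_denominator[OF L] by blast
  define y where "y = (real N / det2 u v) *\<^sub>R (vector [v$2, - v$1] :: pt)"
  have "x \<bullet> y = real N * (det2 x v / det2 u v)" for x
  proof -
    have "x \<bullet> vector [v$2, - v$1] = det2 x v" by (simp add: inner_vec_def sum_2 det2_def)
    then show ?thesis by (simp add: y_def)
  qed
  then have "y \<in> dual_lattice L" unfolding dual_lattice_def using N(2) by simp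
  moreover have "y \<noteq> 0"
  proof
    assume "y = 0"
    then have "v$1 = 0" "v$2 = 0" using N(1) uv(3) by (auto simp: y_def vec_eq_iff forall_2)
    then show False using uv(3) by (simp add: det2_def)
  qed
  ultimately show ?thesis by blast
qed

section \<open>Widths and lattice diameters\<close>

definition dir_width :: "'a::real_inner set \<Rightarrow> 'a \<Rightarrow> real" where
  "dir_width C y = Sup {y \<bullet> (a - b) | a b. a \<in> C \<and> b \<in> C}"

lemma abs_inner_diff_le_dir_width:
  assumes "bounded C" "a \<in> C" "b \<in> C"
  shows "\<bar>y \<bullet> (a - b)\<bar> \<le> dir_width C y"
proof -
  obtain B where B: "\<And>x. x \<in> C \<Longrightarrow> norm x \<le> B" using assms(1) bounded_iff by blast
  have "y \<bullet> (a' - b') \<le> norm y * (2 * B)" if "a' \<in> C" "b' \<in> C" for a' b'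
  proof -
    have "y \<bullet> (a' - b') \<le> norm y * norm (a' - b')" by (metis Cauchy_Schwarz_ineq2 abs_le_D1)
    also have "\<dots> \<le> norm y * (2 * B)"
      using B[OF that(1)] B[OF that(2)] norm_triangle_ineq4[of a' b'] by (simp add: mult_left_mono)
    finally show ?thesis .
  qed
  then have "bdd_above {y \<bullet> (a - b) | a b. a \<in> C \<and> b \<in> C}" unfolding bdd_above_def by blast
  then have "y \<bullet> (a - b) \<le> dir_width C y" "y \<bullet> (b - a) \<le> dir_width C y"
    unfolding dir_width_def using assms(2,3) by (auto intro: cSup_upper)
  then show ?thesis by (simp add: inner_diff_right)
qed

lemma dir_width_le:
  assumes "C \<noteq> {}" "\<And>a b. a \<in> C \<Longrightarrow> b \<in> C \<Longrightarrow> y \<bullet> (a - b) \<le> M"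
  shows "dir_width C y \<le> M"
proof -
  have "{y \<bullet> (a - b) | a b. a \<in> C \<and> b \<in> C} \<noteq> {}" using assms(1) by blast
  then show ?thesis unfolding dir_width_def using assms(2) by (intro cSup_least) auto
qed

lemma dir_width_nonneg: "bounded C \<Longrightarrow> C \<noteq> {} \<Longrightarrow> 0 \<le> dir_width C y"
  using abs_inner_diff_le_dir_width[of C _ _ y] by fastforce

lemma dir_width_mono: "bounded C \<Longrightarrow> C' \<subseteq> C \<Longrightarrow> C' \<noteq> {} \<Longrightarrow> dir_width C' y \<le> dir_width C y"
  using abs_inner_diff_le_dir_width[of C _ _ y] by (intro dir_width_le) force+

lemma dir_width_scaleR_le:
  assumes "bounded C" "C \<noteq> {}"
  shows "dir_width C (k *\<^sub>R y) \<le> \<bar>k\<bar> * dir_width C y"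
proof (rule dir_width_le[OF assms(2)])
  fix a b assume "a \<in> C" "b \<in> C"
  then have "\<bar>y \<bullet> (a - b)\<bar> \<le> dir_width C y" using abs_inner_diff_le_dir_width[OF assms(1)] by blast
  then have "\<bar>k\<bar> * \<bar>y \<bullet> (a - b)\<bar> \<le> \<bar>k\<bar> * dir_width C y" by (simp add: mult_left_mono)
  moreover have "k *\<^sub>R y \<bullet> (a - b) \<le> \<bar>k\<bar> * \<bar>y \<bullet> (a - b)\<bar>"
    by (metis abs_ge_self abs_mult inner_scaleR_left)
  ultimately show "k *\<^sub>R y \<bullet> (a - b) \<le> \<bar>k\<bar> * dir_width C y" by linarith
qed

lemma dir_width_attained:
  fixes C :: "'a::{real_inner, heine_borel} set"
  assumes "compact C" "C \<noteq> {}"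
  obtains p q where "p \<in> C" "q \<in> C" "dir_width C y = y \<bullet> (p - q)"
proof -
  have "compact (C \<times> C)" "C \<times> C \<noteq> {}" using assms by (simp_all add: compact_Times)
  moreover have "continuous_on (C \<times> C) (\<lambda>z. y \<bullet> (fst z - snd z))" by (intro continuous_intros)
  ultimately obtain z where z: "z \<in> C \<times> C"
    and max: "\<forall>z'\<in>C \<times> C. y \<bullet> (fst z' - snd z') \<le> y \<bullet> (fst z - snd z)"
    by (metis (no_types, lifting) continuous_attains_sup)
  have "dir_width C y \<le> y \<bullet> (fst z - snd z)"
    using max by (intro dir_width_le[OF assms(2)]) auto
  moreover have "\<bar>y \<bullet> (fst z - snd z)\<bar> \<le> dir_width C y"
    using z by (intro abs_inner_diff_le_dir_width compact_imp_bounded[OF assms(1)]) auto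
  ultimately have "dir_width C y = y \<bullet> (fst z - snd z)" by linarith
  then show thesis using that[of "fst z" "snd z"] z by auto
qed

lemma lattice_width_eq: "lattice_width L C = Inf (dir_width C ` (dual_lattice L - {0}))"
  by (simp add: lattice_width_def dir_width_def)

lemma lattice_width_le_dir_width:
  assumes "bounded C" "C \<noteq> {}" "y \<in> dual_lattice L" "y \<noteq> 0"
  shows "lattice_width L C \<le> dir_width C y"
  unfolding lattice_width_eq using assms dir_width_nonneg[OF assms(1,2)]
  by (intro cInf_lower) (auto simp: bdd_below_def)

lemma lattice_width_greatest:
  assumes "is_lattice L" "\<And>y. y \<in> dual_lattice L \<Longrightarrow> y \<noteq> 0 \<Longrightarrow> M \<le> dir_width C y"
  shows "M \<le> lattice_width L C"
  unfolding lattice_width_eq using assms dual_lattice_nonzero[OF assms(1)]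
  by (intro cInf_greatest) auto

lemma lattice_width_nonneg:
  "is_lattice L \<Longrightarrow> bounded C \<Longrightarrow> C \<noteq> {} \<Longrightarrow> 0 \<le> lattice_width L C"
  by (intro lattice_width_greatest dir_width_nonneg)

lemma lattice_width_less_obtain:
  assumes "is_lattice L" "bounded C" "C \<noteq> {}" "lattice_width L C < M"
  obtains y where "y \<in> dual_lattice L" "y \<noteq> 0" "dir_width C y < M"
proof -
  have "bdd_below (dir_width C ` (dual_lattice L - {0}))"
    using dir_width_nonneg[OF assms(2,3)] by (auto simp: bdd_below_def)
  moreover have "dir_width C ` (dual_lattice L - {0}) \<noteq> {}"
    using dual_lattice_nonzero[OF assms(1)] by blast
  ultimately show thesis
    using assms(4) that unfolding lattice_width_eq by (auto simp: cInf_less_iff)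
qed

lemma lattice_width_mono:
  assumes "is_lattice L" "bounded C" "C' \<subseteq> C" "C' \<noteq> {}"
  shows "lattice_width L C' \<le> lattice_width L C"
proof (rule lattice_width_greatest[OF assms(1)])
  fix y assume "y \<in> dual_lattice L" "y \<noteq> 0"
  then have "lattice_width L C' \<le> dir_width C' y"
    using assms bounded_subset by (intro lattice_width_le_dir_width) auto
  also have "\<dots> \<le> dir_width C y" using assms(2-4) by (rule dir_width_mono)
  finally show "lattice_width L C' \<le> dir_width C y" .
qed

lemma lattice_segment_obtain_primitive:
  assumes L: "is_lattice L" and seg: "lattice_segment L a b"
  obtains v t where "is_primitive L (b - a) v" "t > 0" "b - a = t *\<^sub>R v" "lattice_length L a b = t"
proof -
  define v where "v = primitive_vec L (b - a)"
  have v: "is_primitive L (b - a) v" unfolding v_def using is_primitive_lattice_segment[OF L seg] .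
  then obtain c where c: "c > 0" "v = c *\<^sub>R (b - a)" unfolding is_primitive_def by blast
  then have ba: "b - a = (1 / c) *\<^sub>R v" by simp
  have "a \<noteq> b" using seg unfolding lattice_segment_def by blast
  then have "lattice_length L a b = \<bar>1 / c\<bar>" using lattice_length_eq_abs[OF L v _ ba] by blast
  then show thesis using that[OF v _ ba] c(1) by simp
qed

lemma lattice_length_le_dir_width:
  assumes L: "is_lattice L" and "bounded C" and seg: "lattice_segment L a b"
    and "closed_segment a b \<subseteq> C" and y: "y \<in> dual_lattice L" "y \<bullet> (b - a) \<noteq> 0"
  shows "lattice_length L a b \<le> dir_width C y"
proof -
  obtain v t where v: "is_primitive L (b - a) v" and t: "t > 0" "b - a = t *\<^sub>R v"
    and len: "lattice_length L a b = t"
    using lattice_segment_obtain_primitive[OF L seg] by blast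
  have "v \<bullet> y \<in> \<int>" using v y(1) unfolding is_primitive_def dual_lattice_def by blast
  moreover have "v \<bullet> y \<noteq> 0" using y(2) t(2) by (simp add: inner_commute)
  ultimately have "1 \<le> \<bar>y \<bullet> v\<bar>" by (metis Ints_nonzero_abs_ge1 inner_commute)
  then have "t \<le> \<bar>y \<bullet> (b - a)\<bar>" using t by (simp add: abs_mult)
  also have "\<dots> \<le> dir_width C y"
    using assms(2,4) by (intro abs_inner_diff_le_dir_width) auto
  finally show ?thesis using len by simp
qed

definition lattice_lengths :: "pt set \<Rightarrow> pt set \<Rightarrow> real set" where
  "lattice_lengths L C =
     {lattice_length L a b | a b. lattice_segment L a b \<and> closed_segment a b \<subseteq> C}"

lemma lattice_diam_eq: "lattice_diam L C = Sup (lattice_lengths L C)"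
  by (simp add: lattice_diam_def lattice_lengths_def)

lemma lattice_lengths_bdd_above:
  assumes L: "is_lattice L" and "bounded C"
  shows "bdd_above (lattice_lengths L C)"
proof -
  obtain e where e: "e > 0" "\<And>x. x \<in> L \<Longrightarrow> x \<noteq> 0 \<Longrightarrow> e \<le> norm x"
    using is_lattice_discrete[OF L] by blast
  obtain B where B: "\<And>x. x \<in> C \<Longrightarrow> norm x \<le> B" using assms(2) bounded_iff by blast
  have "lattice_length L a b \<le> 2 * B / e"
    if seg: "lattice_segment L a b" and sub: "closed_segment a b \<subseteq> C" for a b
  proof -
    obtain v t where v: "is_primitive L (b - a) v" and t: "t > 0" "b - a = t *\<^sub>R v"
      and len: "lattice_length L a b = t"
      using lattice_segment_obtain_primitive[OF L seg] by blast
    have "e \<le> norm v" using v e(2) unfolding is_primitive_def by blast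
    have "t * norm v = norm (b - a)" using t by simp
    also have "\<dots> \<le> 2 * B"
    proof -
      have "a \<in> C" "b \<in> C" using sub by auto
      then show ?thesis using B[of a] B[of b] norm_triangle_ineq4[of b a] by linarith
    qed
    finally have "t * e \<le> 2 * B" using \<open>e \<le> norm v\<close> t(1)
      by (meson mult_left_mono order_trans less_imp_le)
    then show ?thesis using len e(1) by (simp add: field_simps)
  qed
  then show ?thesis unfolding lattice_lengths_def bdd_above_def by blast
qed

lemma lattice_lengths_nonempty:
  assumes L: "is_lattice L" and "interior C \<noteq> {}"
  shows "lattice_lengths L C \<noteq> {}"
proof -
  obtain v w where v: "v \<in> L" "det2 v w \<noteq> 0" using is_lattice_obtain_det2_nonzero[OF L] by blast
  then have "v \<noteq> 0" by (auto simp: det2_def)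
  obtain x r where r: "r > 0" "ball x r \<subseteq> C" using assms(2) mem_interior by blast
  define b where "b = x + (r / (2 * norm v)) *\<^sub>R v"
  have "norm (b - x) = r / 2" unfolding b_def using \<open>v \<noteq> 0\<close> r by simp
  then have "closed_segment x b \<subseteq> ball x r"
    using r by (intro closed_segment_subset) (auto simp: dist_norm norm_minus_commute)
  moreover have "lattice_segment L x b"
    unfolding lattice_segment_def using v \<open>v \<noteq> 0\<close> r \<open>norm (b - x) = r / 2\<close> by (auto simp: b_def)
  ultimately show ?thesis using r(2) unfolding lattice_lengths_def by blast
qed

lemma lattice_length_le_diam:
  assumes "is_lattice L" "bounded C" "lattice_segment L a b" "closed_segment a b \<subseteq> C"
  shows "lattice_length L a b \<le> lattice_diam L C"
  unfolding lattice_diam_eq using assms lattice_lengths_bdd_above[OF assms(1,2)]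
  by (intro cSup_upper) (auto simp: lattice_lengths_def)

lemma lattice_diam_le:
  assumes "is_lattice L" "interior C \<noteq> {}"
    and "\<And>a b. lattice_segment L a b \<Longrightarrow> closed_segment a b \<subseteq> C \<Longrightarrow> lattice_length L a b \<le> M"
  shows "lattice_diam L C \<le> M"
  unfolding lattice_diam_eq using assms lattice_lengths_nonempty[OF assms(1,2)]
  by (intro cSup_least) (auto simp: lattice_lengths_def)

lemma lattice_diam_mono:
  assumes "is_lattice L" "interior C \<noteq> {}" "C \<subseteq> C'" "bounded C'"
  shows "lattice_diam L C \<le> lattice_diam L C'"
  using assms by (intro lattice_diam_le lattice_length_le_diam) auto

lemma lattice_diam_less_obtain:
  assumes "is_lattice L" "bounded C" "interior C \<noteq> {}" "M < lattice_diam L C"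
  obtains a b where "lattice_segment L a b" "closed_segment a b \<subseteq> C" "M < lattice_length L a b"
  using assms less_cSup_iff[OF lattice_lengths_nonempty[OF assms(1,3)]
      lattice_lengths_bdd_above[OF assms(1,2)]]
  unfolding lattice_diam_eq lattice_lengths_def by blast

section \<open>Convex geometry\<close>

lemma orthogonal_parallel_2:
  fixes u v w :: "'a::euclidean_space"
  assumes "DIM('a) = 2" "u \<noteq> 0" "v \<noteq> 0" "u \<bullet> v = 0" "u \<bullet> w = 0"
  obtains k where "w = k *\<^sub>R v"
proof -
  have "span {v} = {x. u \<bullet> x = 0}"
  proof (rule subspace_dim_equal)
    show "span {v} \<subseteq> {x. u \<bullet> x = 0}"
      using assms(4) subspace_hyperplane[of u] by (simp add: span_minimal)
    show "dim {x. u \<bullet> x = 0} \<le> dim (span {v})"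
      using assms(1-3) by (simp add: dim_hyperplane)
  qed (simp_all add: subspace_hyperplane)
  then show thesis using that assms(5) by (auto simp: span_singleton)
qed

lemma obtain_small_orthogonal:
  fixes f y :: "'a::euclidean_space"
  assumes "2 \<le> DIM('a)" "0 < \<delta>"
  obtains e where "e \<noteq> 0" "f \<bullet> e = 0" "\<bar>y \<bullet> e\<bar> < \<delta>"
proof -
  obtain e1 where e1: "e1 \<noteq> 0" "orthogonal f e1" using orthogonal_to_vector_exists[OF assms(1)]
    by blast
  define M where "M = norm y * norm e1 + 1"
  have "M > 0" unfolding M_def by (simp add: add_nonneg_pos)
  define \<epsilon> where "\<epsilon> = \<delta> / (2 * M)"
  have "\<epsilon> > 0" unfolding \<epsilon>_def using assms(2) \<open>M > 0\<close> by simp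
  define e where "e = \<epsilon> *\<^sub>R e1"
  have "\<bar>y \<bullet> e\<bar> = \<epsilon> * \<bar>y \<bullet> e1\<bar>" unfolding e_def using \<open>\<epsilon> > 0\<close> by (simp add: abs_mult)
  also have "\<dots> \<le> \<epsilon> * (norm y * norm e1)"
    using \<open>\<epsilon> > 0\<close> Cauchy_Schwarz_ineq2[of y e1] by (simp add: mult_left_mono)
  also have "\<dots> < \<epsilon> * M" unfolding M_def using \<open>\<epsilon> > 0\<close> by simp
  also have "\<dots> = \<delta> / 2" unfolding \<epsilon>_def using \<open>M > 0\<close> by simp
  also have "\<dots> < \<delta>" using assms(2) by simp
  finally show thesis using that[of e] e1 \<open>\<epsilon> > 0\<close> unfolding e_def orthogonal_def by simp
qed

lemma convex_hull_shrunk_body_psubset: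
  fixes C :: "'a::euclidean_space set"
  assumes "2 \<le> DIM('a)" "compact C" "convex C" "c \<in> interior C" "0 \<le> t" "t < 1" "p \<in> C" "q \<in> C"
  shows "convex hull (insert p (insert q ((\<lambda>x. c + t *\<^sub>R (x - c)) ` C))) \<subset> C"
    (is "convex hull ?S \<subset> C")
proof -
  have K_interior: "c + t *\<^sub>R (x - c) \<in> interior C" if "x \<in> C" for x
  proof -
    have "c + t *\<^sub>R (x - c) = x - (1 - t) *\<^sub>R (x - c)" by (simp add: algebra_simps)
    then show ?thesis using mem_interior_convex_shrink[OF assms(3,4) that] assms(5,6) by simp
  qed
  then have sub: "convex hull ?S \<subseteq> C"
    using interior_subset assms(3,7,8) by (intro hull_minimal) auto
  have "C \<noteq> convex hull ?S"
  proof
    assume C_eq: "C = convex hull ?S"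
    have "{x. x extreme_point_of C} \<subseteq> {p, q}"
    proof
      fix x assume "x \<in> {x. x extreme_point_of C}"
      then have x: "x extreme_point_of C" by simp
      then have "x \<in> ?S" using extreme_point_of_convex_hull[of x ?S] C_eq by simp
      moreover have "x \<notin> interior C" using extreme_point_not_in_interior[OF x] .
      ultimately show "x \<in> {p, q}" using K_interior by blast
    qed
    then have "convex hull {x. x extreme_point_of C} \<subseteq> closed_segment p q"
      by (simp add: hull_mono segment_convex_hull)
    then have "C \<subseteq> closed_segment p q"
      by (subst Krein_Milman_Minkowski[OF assms(2,3)])
    then have "interior C \<subseteq> interior (closed_segment p q)" by (rule interior_mono)
    then show False using assms(4) interior_closed_segment_ge2[OF assms(1)] by blast
  qed
  with sub show ?thesis by blast
qed

lemma interior_convex_hull_shrunk_body_nonempty: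
  fixes C :: "'a::euclidean_space set"
  assumes "interior C \<noteq> {}" "t \<noteq> 0" "(\<lambda>x. c + t *\<^sub>R (x - c)) ` C \<subseteq> S"
  shows "interior (convex hull S) \<noteq> {}"
proof -
  let ?U = "(\<lambda>x. c + t *\<^sub>R (x - c)) ` interior C"
  have affine: "(\<lambda>x. c + t *\<^sub>R (x - c)) = (\<lambda>x. (c - t *\<^sub>R c) + t *\<^sub>R x)"
    by (auto simp: algebra_simps)
  have "open ?U" unfolding affine by (rule open_affinity[OF open_interior assms(2)])
  moreover have "?U \<subseteq> convex hull S"
    using assms(3) interior_subset hull_subset[of S convex] by blast
  ultimately have "?U \<subseteq> interior (convex hull S)" by (rule interior_maximal[rotated])
  then show ?thesis using assms(1) by blast
qed

lemma dir_width_shrunk_le: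
  assumes "bounded S" "C \<noteq> {}" "(\<lambda>x. c + t *\<^sub>R (x - c)) ` C \<subseteq> S" "t > 0"
  shows "t * dir_width C y \<le> dir_width S y"
proof -
  have "y \<bullet> (a - b) \<le> dir_width S y / t" if "a \<in> C" "b \<in> C" for a b
  proof -
    have "\<bar>y \<bullet> ((c + t *\<^sub>R (a - c)) - (c + t *\<^sub>R (b - c)))\<bar> \<le> dir_width S y"
      using that assms(3) by (intro abs_inner_diff_le_dir_width[OF assms(1)]) auto
    then have "t * (y \<bullet> (a - b)) \<le> dir_width S y" by (simp add: algebra_simps abs_le_iff)
    then show ?thesis using assms(4) by (simp add: field_simps)
  qed
  then have "dir_width C y \<le> dir_width S y / t" by (rule dir_width_le[OF assms(2)])
  then show ?thesis using assms(4) by (simp add: field_simps)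
qed

lemma maximal_chord_supporting_slab:
  fixes C :: "'a::euclidean_space set"
  assumes "compact C" "convex C" "interior C \<noteq> {}" "v \<noteq> 0"
  obtains \<mu> f where "0 < \<mu>" "\<exists>x\<in>C. \<exists>y\<in>C. y - x = \<mu> *\<^sub>R v" "0 < f \<bullet> v"
    "\<And>x y. x \<in> C \<Longrightarrow> y \<in> C \<Longrightarrow> f \<bullet> (y - x) \<le> \<mu> * (f \<bullet> v)"
proof -
  define D where "D = (\<Union>y\<in>C. \<Union>x\<in>C. {y - x})"
  have D: "compact D" "convex D" unfolding D_def
    using compact_differences'[OF assms(1,1)] convex_differences[OF assms(2,2)] by auto
  obtain c r where r: "r > 0" "ball c r \<subseteq> C" using assms(3) mem_interior by blast
  have "ball 0 r \<subseteq> D"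
  proof
    fix z :: 'a assume "z \<in> ball 0 r"
    then have "c + z \<in> C" "c \<in> C" using r by (auto simp: dist_norm)
    then show "z \<in> D" unfolding D_def by force
  qed
  then have "0 \<in> interior D" using r(1) by (meson centre_in_ball interior_maximal open_ball subsetD)
  then obtain \<mu> where "0 < \<mu>" "0 + \<mu> *\<^sub>R v \<in> frontier D"
    "\<And>e. 0 \<le> e \<Longrightarrow> e < \<mu> \<Longrightarrow> 0 + e *\<^sub>R v \<in> interior D"
    by (rule ray_to_frontier[OF compact_imp_bounded[OF D(1)] _ assms(4)]) (rule that)
  then have \<mu>: "0 < \<mu>" "\<mu> *\<^sub>R v \<in> frontier D" by simp_all
  have closure_D: "closure D = D" using D(1) by (simp add: compact_imp_closed)
  have rel_interior_D: "rel_interior D = interior D"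
    using \<open>0 \<in> interior D\<close> rel_interior_nonempty_interior by blast
  have "\<mu> *\<^sub>R v \<in> D" "\<mu> *\<^sub>R v \<notin> interior D" using \<mu>(2) closure_D unfolding frontier_def by auto
  then have "\<mu> *\<^sub>R v \<in> closure D" "\<mu> *\<^sub>R v \<notin> rel_interior D"
    by (simp_all add: closure_D rel_interior_D)
  then obtain a where a: "a \<noteq> 0" "\<And>z. z \<in> closure D \<Longrightarrow> a \<bullet> (\<mu> *\<^sub>R v) \<le> a \<bullet> z"
    "\<And>z. z \<in> rel_interior D \<Longrightarrow> a \<bullet> (\<mu> *\<^sub>R v) < a \<bullet> z"
    by (rule supporting_hyperplane_relative_frontier[OF D(2)]) (rule that)
  note a = a[unfolded closure_D rel_interior_D]
  show thesis
  proof (rule that[of \<mu> "- a"])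
    show "0 < \<mu>" by fact
    obtain y x where "y \<in> C" "x \<in> C" "\<mu> *\<^sub>R v = y - x"
      using \<open>\<mu> *\<^sub>R v \<in> D\<close> unfolding D_def by blast
    then show "\<exists>x\<in>C. \<exists>y\<in>C. y - x = \<mu> *\<^sub>R v" by metis
    show "0 < - a \<bullet> v"
      using a(3)[OF \<open>0 \<in> interior D\<close>] \<mu>(1) by (auto simp: mult_less_0_iff)
    fix x y assume "x \<in> C" "y \<in> C"
    then have "y - x \<in> D" unfolding D_def by blast
    then show "- a \<bullet> (y - x) \<le> \<mu> * (- a \<bullet> v)" using a(2) by simp
  qed
qed

definition segment_sweep :: "'a::real_vector set \<Rightarrow> 'a \<Rightarrow> 'a set" where
  "segment_sweep C e = (\<Union>x\<in>C. \<Union>s\<in>closed_segment 0 e. {x + s})"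

lemma mem_segment_sweep:
  "z \<in> segment_sweep C e \<longleftrightarrow> (\<exists>x\<in>C. \<exists>t. 0 \<le> t \<and> t \<le> 1 \<and> z = x + t *\<^sub>R e)"
  unfolding segment_sweep_def closed_segment_def by auto

lemma segment_sweep_superset: "C \<subseteq> segment_sweep C e"
  by (force simp: mem_segment_sweep)

lemma compact_segment_sweep:
  fixes C :: "'a::real_normed_vector set"
  shows "compact C \<Longrightarrow> compact (segment_sweep C e)"
  unfolding segment_sweep_def by (intro compact_sums' compact_segment)

lemma convex_segment_sweep: "convex C \<Longrightarrow> convex (segment_sweep C e)"
  unfolding segment_sweep_def by (intro convex_sums) auto

lemma segment_sweep_neq:
  fixes C :: "'a::real_inner set"
  assumes "compact C" "C \<noteq> {}" "e \<noteq> 0"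
  shows "segment_sweep C e \<noteq> C"
proof
  assume eq: "segment_sweep C e = C"
  have "continuous_on C (\<lambda>x. e \<bullet> x)" by (intro continuous_intros)
  then obtain m where m: "m \<in> C" "\<forall>x\<in>C. e \<bullet> x \<le> e \<bullet> m"
    using continuous_attains_sup[OF assms(1,2)] by blast
  have "m + e \<in> segment_sweep C e"
    unfolding mem_segment_sweep using m(1) by (intro bexI[of _ m] exI[of _ 1]) auto
  then have "m + e \<in> C" using eq by simp
  then have "e \<bullet> (m + e) \<le> e \<bullet> m" using m(2) by blast
  then have "e \<bullet> e \<le> 0" by (simp add: inner_add_right)
  then show False using assms(3) by (metis inner_gt_zero_iff not_le)
qed

lemma dir_width_segment_sweep_le:
  assumes "C \<noteq> {}" "bounded C"
  shows "dir_width (segment_sweep C e) y \<le> dir_width C y + \<bar>y \<bullet> e\<bar>"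
proof (rule dir_width_le)
  show "segment_sweep C e \<noteq> {}" using assms(1) segment_sweep_superset by blast
  fix a b assume "a \<in> segment_sweep C e" "b \<in> segment_sweep C e"
  then obtain xa ta xb tb where "xa \<in> C" "xb \<in> C" "0 \<le> ta" "ta \<le> 1" "0 \<le> tb" "tb \<le> 1"
    and ab: "a = xa + ta *\<^sub>R e" "b = xb + tb *\<^sub>R e" unfolding mem_segment_sweep by blast
  then have width: "\<bar>y \<bullet> (xa - xb)\<bar> \<le> dir_width C y" and "\<bar>ta - tb\<bar> \<le> 1"
    using abs_inner_diff_le_dir_width[OF assms(2)] by auto
  then have "\<bar>(ta - tb) * (y \<bullet> e)\<bar> \<le> \<bar>y \<bullet> e\<bar>"
    unfolding abs_mult by (intro mult_left_le_one_le) auto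
  moreover have "y \<bullet> (a - b) = y \<bullet> (xa - xb) + (ta - tb) * (y \<bullet> e)"
    unfolding ab by (simp add: algebra_simps)
  ultimately show "y \<bullet> (a - b) \<le> dir_width C y + \<bar>y \<bullet> e\<bar>" using width by linarith
qed

lemma segment_sweep_chord_le:
  assumes slab: "\<And>x y. x \<in> C \<Longrightarrow> y \<in> C \<Longrightarrow> f \<bullet> (y - x) \<le> \<mu> * (f \<bullet> v)"
    and "0 < f \<bullet> v" "f \<bullet> e = 0"
    and "a \<in> segment_sweep C e" "b \<in> segment_sweep C e" "b - a = t *\<^sub>R v"
  shows "\<bar>t\<bar> \<le> \<mu>"
proof -
  obtain xa ta xb tb where "xa \<in> C" "xb \<in> C" and ab: "a = xa + ta *\<^sub>R e" "b = xb + tb *\<^sub>R e"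
    using assms(4,5) unfolding mem_segment_sweep by blast
  have "t * (f \<bullet> v) = f \<bullet> (b - a)" using assms(6) by simp
  also have "\<dots> = f \<bullet> (xb - xa)"
    unfolding ab using assms(3) by (simp add: inner_diff_right inner_add_right)
  finally have "t * (f \<bullet> v) \<le> \<mu> * (f \<bullet> v)" "(- t) * (f \<bullet> v) \<le> \<mu> * (f \<bullet> v)"
    using slab[OF \<open>xa \<in> C\<close> \<open>xb \<in> C\<close>] slab[OF \<open>xb \<in> C\<close> \<open>xa \<in> C\<close>]
    by (simp_all add: inner_diff_right)
  then have "t \<le> \<mu>" "- t \<le> \<mu>" using assms(2) mult_right_le_imp_le by blast+
  then show ?thesis by linarith
qed

section \<open>Bodies whose lattice diameter exceeds their lattice width\<close>

lemma convex_body_bounded_nonempty: "convex_body C \<Longrightarrow> bounded C \<and> C \<noteq> {}"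
  unfolding convex_body_def using compact_imp_bounded interior_subset by blast

lemma lattice_width_lt_diam_obtain:
  assumes L: "is_lattice L" and C: "convex_body C" and lt: "lattice_width L C < lattice_diam L C"
  obtains a b y0 where "lattice_segment L a b" "closed_segment a b \<subseteq> C"
    "lattice_width L C < lattice_length L a b"
    "y0 \<in> dual_lattice L" "y0 \<noteq> 0" "dir_width C y0 < lattice_length L a b" "y0 \<bullet> (b - a) = 0"
proof -
  have C': "bounded C" "C \<noteq> {}" "interior C \<noteq> {}"
    using C convex_body_bounded_nonempty unfolding convex_body_def by blast+
  obtain a b where ab: "lattice_segment L a b" "closed_segment a b \<subseteq> C"
    "lattice_width L C < lattice_length L a b"
    using lattice_diam_less_obtain[OF L C'(1,3) lt] by blast
  then obtain y0 where y0: "y0 \<in> dual_lattice L" "y0 \<noteq> 0" "dir_width C y0 < lattice_length L a b"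
    using lattice_width_less_obtain[OF L C'(1,2)] by blast
  moreover have "y0 \<bullet> (b - a) = 0"
    using lattice_length_le_dir_width[OF L C'(1) ab(1,2) y0(1)] y0(3) by fastforce
  ultimately show thesis using ab by (intro that)
qed

lemma lattice_width_le_convex_hull_shrunk:
  assumes L: "is_lattice L" and C: "convex_body C"
    and seg: "lattice_segment L a b" "closed_segment a b \<subseteq> C"
    and t: "0 < t" "lattice_width L C \<le> t * lattice_length L a b"
    and y0: "y0 \<in> dual_lattice L" "y0 \<noteq> 0" "y0 \<bullet> (b - a) = 0"
    and pq: "p \<in> C" "q \<in> C" "dir_width C y0 = y0 \<bullet> (p - q)"
  shows "lattice_width L C
    \<le> lattice_width L (convex hull (insert p (insert q ((\<lambda>x. c + t *\<^sub>R (x - c)) ` C))))"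
    (is "_ \<le> lattice_width L (convex hull ?S)")
proof (rule lattice_width_greatest[OF L])
  have bC: "bounded C" "C \<noteq> {}" using convex_body_bounded_nonempty[OF C] by auto
  have "compact ?S"
    using C unfolding convex_body_def
    by (intro compact_insert compact_continuous_image continuous_intros) auto
  then have bC': "bounded (convex hull ?S)" by (intro compact_imp_bounded compact_convex_hull)
  have S_sub: "?S \<subseteq> convex hull ?S" by (rule hull_subset)
  fix y assume y: "y \<in> dual_lattice L" "y \<noteq> 0"
  show "lattice_width L C \<le> dir_width (convex hull ?S) y"
  proof (cases "y \<bullet> (b - a) = 0")
    case False
    have "lattice_width L C \<le> t * lattice_length L a b" by (fact t(2))
    also have "\<dots> \<le> t * dir_width C y"
      using lattice_length_le_dir_width[OF L bC(1) seg y(1) False] t(1) by simp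
    also have "\<dots> \<le> dir_width (convex hull ?S) y"
      using S_sub by (intro dir_width_shrunk_le[OF bC' bC(2) _ t(1)]) auto
    finally show ?thesis .
  next
    case True
    have "b - a \<noteq> 0" using seg(1) unfolding lattice_segment_def by auto
    moreover have "(b - a) \<bullet> y0 = 0" "(b - a) \<bullet> y = 0" using y0(3) True
      by (simp_all add: inner_commute)
    ultimately obtain k where k: "y = k *\<^sub>R y0"
      using orthogonal_parallel_2[of "b - a" y0 y] y0(2) by auto
    have "lattice_width L C \<le> dir_width C y" using lattice_width_le_dir_width[OF bC y] .
    also have "\<dots> \<le> \<bar>k\<bar> * dir_width C y0" unfolding k by (rule dir_width_scaleR_le[OF bC])
    also have "\<dots> = \<bar>y \<bullet> (p - q)\<bar>"
      using pq(3) dir_width_nonneg[OF bC, of y0] by (simp add: k abs_mult)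
    also have "\<dots> \<le> dir_width (convex hull ?S) y"
      using S_sub by (intro abs_inner_diff_le_dir_width[OF bC']) auto
    finally show ?thesis .
  qed
qed

lemma not_lattice_reduced_if_width_lt_diam:
  assumes L: "is_lattice L" and C: "convex_body C" and lt: "lattice_width L C < lattice_diam L C"
  shows "\<not> lattice_reduced L C"
proof -
  obtain a b y0 where seg: "lattice_segment L a b" "closed_segment a b \<subseteq> C"
    and Wl: "lattice_width L C < lattice_length L a b"
    and y0: "y0 \<in> dual_lattice L" "y0 \<noteq> 0" "dir_width C y0 < lattice_length L a b"
      "y0 \<bullet> (b - a) = 0"
    by (rule lattice_width_lt_diam_obtain[OF L C lt])
  define W where "W = lattice_width L C"
  define l where "l = lattice_length L a b"
  have cC: "compact C" "convex C" "interior C \<noteq> {}" using C unfolding convex_body_def by auto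
  have bC: "bounded C" "C \<noteq> {}" using convex_body_bounded_nonempty[OF C] by auto
  have "0 \<le> W" "W < l" unfolding W_def l_def using lattice_width_nonneg[OF L bC] Wl by auto
  define t where "t = (W + l) / (2 * l)"
  have t: "0 < t" "t < 1" "W \<le> t * l"
    using \<open>0 \<le> W\<close> \<open>W < l\<close> unfolding t_def by (simp_all add: field_simps)
  obtain p q where pq: "p \<in> C" "q \<in> C" "dir_width C y0 = y0 \<bullet> (p - q)"
    using dir_width_attained[OF cC(1) bC(2)] by blast
  obtain c where c: "c \<in> interior C" using cC(3) by blast
  define C' where "C' = convex hull (insert p (insert q ((\<lambda>x. c + t *\<^sub>R (x - c)) ` C)))"
  have "C' \<subset> C" unfolding C'_def
    using convex_hull_shrunk_body_psubset[OF _ cC(1,2) c _ t(2) pq(1,2)] t(1) by simp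
  have "compact C'" unfolding C'_def using cC(1)
    by (intro compact_convex_hull compact_insert compact_continuous_image continuous_intros)
  moreover have "interior C' \<noteq> {}" unfolding C'_def
    using t(1) by (intro interior_convex_hull_shrunk_body_nonempty[OF cC(3), of t c]) blast+
  ultimately have "convex_body C'" unfolding convex_body_def C'_def by simp
  moreover have "lattice_width L C' = lattice_width L C"
  proof (rule antisym)
    show "lattice_width L C' \<le> lattice_width L C"
      using lattice_width_mono[OF L bC(1)] \<open>C' \<subset> C\<close> \<open>interior C' \<noteq> {}\<close> interior_subset by blast
    show "lattice_width L C \<le> lattice_width L C'" unfolding C'_def
      using t unfolding W_def l_def
      by (intro lattice_width_le_convex_hull_shrunk[OF L C seg _ _ y0(1,2,4) pq])
  qed
  ultimately show ?thesis using \<open>C' \<subset> C\<close> unfolding lattice_reduced_def by blast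
qed

lemma lattice_diam_segment_sweep_le:
  assumes L: "is_lattice L" and C: "convex_body C" and v: "is_primitive L d v"
    and y0: "y0 \<in> dual_lattice L" "y0 \<noteq> 0" "y0 \<bullet> v = 0"
    and slab: "\<And>x y. x \<in> C \<Longrightarrow> y \<in> C \<Longrightarrow> f \<bullet> (y - x) \<le> \<mu> * (f \<bullet> v)" "0 < f \<bullet> v"
    and e: "f \<bullet> e = 0" and M: "\<mu> \<le> M" "dir_width C y0 + \<bar>y0 \<bullet> e\<bar> \<le> M"
  shows "lattice_diam L (segment_sweep C e) \<le> M"
proof (rule lattice_diam_le[OF L])
  have bC: "bounded C" "C \<noteq> {}" using convex_body_bounded_nonempty[OF C] by auto
  have "compact (segment_sweep C e)" using C unfolding convex_body_def
    by (simp add: compact_segment_sweep)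
  then have bC': "bounded (segment_sweep C e)" by (rule compact_imp_bounded)
  show "interior (segment_sweep C e) \<noteq> {}"
    using C interior_mono[OF segment_sweep_superset] unfolding convex_body_def by blast
  fix a b assume seg: "lattice_segment L a b" "closed_segment a b \<subseteq> segment_sweep C e"
  show "lattice_length L a b \<le> M"
  proof (cases "y0 \<bullet> (b - a) = 0")
    case False
    have "lattice_length L a b \<le> dir_width (segment_sweep C e) y0"
      by (rule lattice_length_le_dir_width[OF L bC' seg y0(1) False])
    also have "\<dots> \<le> dir_width C y0 + \<bar>y0 \<bullet> e\<bar>" by (rule dir_width_segment_sweep_le[OF bC(2,1)])
    finally show ?thesis using M(2) by linarith
  next
    case True
    have "v \<noteq> 0" using v unfolding is_primitive_def by blast
    then obtain r where r: "b - a = r *\<^sub>R v"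
      using orthogonal_parallel_2[OF _ y0(2) _ y0(3) True] by auto
    have "a \<noteq> b" using seg(1) unfolding lattice_segment_def by blast
    then have "lattice_length L a b = \<bar>r\<bar>" by (rule lattice_length_eq_abs[OF L v _ r])
    also have "\<dots> \<le> \<mu>" using seg(2) by (intro segment_sweep_chord_le[OF slab e _ _ r]) auto
    finally show ?thesis using M(1) by linarith
  qed
qed

lemma not_lattice_complete_if_width_lt_diam:
  assumes L: "is_lattice L" and C: "convex_body C" and lt: "lattice_width L C < lattice_diam L C"
  shows "\<not> lattice_complete L C"
proof -
  obtain a b y0 where seg: "lattice_segment L a b" "closed_segment a b \<subseteq> C"
    and "lattice_width L C < lattice_length L a b"
    and y0: "y0 \<in> dual_lattice L" "y0 \<noteq> 0" "dir_width C y0 < lattice_length L a b"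
      "y0 \<bullet> (b - a) = 0"
    by (rule lattice_width_lt_diam_obtain[OF L C lt])
  define D where "D = lattice_diam L C"
  have cC: "compact C" "convex C" "interior C \<noteq> {}" using C unfolding convex_body_def by auto
  have bC: "bounded C" "C \<noteq> {}" using convex_body_bounded_nonempty[OF C] by auto
  have "lattice_length L a b \<le> D" unfolding D_def by (rule lattice_length_le_diam[OF L bC(1) seg])
  then have "dir_width C y0 < D" using y0(3) by linarith
  obtain v s where v: "is_primitive L (b - a) v" and s: "s > 0" "b - a = s *\<^sub>R v"
    using lattice_segment_obtain_primitive[OF L seg(1)] by blast
  have "v \<in> L" "v \<noteq> 0" using v unfolding is_primitive_def by auto
  obtain \<mu> f where \<mu>: "0 < \<mu>" "\<exists>x\<in>C. \<exists>y\<in>C. y - x = \<mu> *\<^sub>R v"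
    and f: "0 < f \<bullet> v" "\<And>x y. x \<in> C \<Longrightarrow> y \<in> C \<Longrightarrow> f \<bullet> (y - x) \<le> \<mu> * (f \<bullet> v)"
    using maximal_chord_supporting_slab[OF cC \<open>v \<noteq> 0\<close>] by blast
  then obtain x y where xy: "x \<in> C" "y \<in> C" "y - x = \<mu> *\<^sub>R v" "x \<noteq> y"
    using \<open>v \<noteq> 0\<close> by fastforce
  then have "lattice_segment L x y" "closed_segment x y \<subseteq> C"
    using \<open>v \<in> L\<close> \<open>v \<noteq> 0\<close> closed_segment_subset[OF xy(1,2) cC(2)]
    unfolding lattice_segment_def by auto
  then have "lattice_length L x y \<le> D" unfolding D_def by (rule lattice_length_le_diam[OF L bC(1)])
  then have "\<mu> \<le> D" using lattice_length_eq_abs[OF L v xy(4,3)] \<mu>(1) by simp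
  obtain e where e: "e \<noteq> 0" "f \<bullet> e = 0" "\<bar>y0 \<bullet> e\<bar> < D - dir_width C y0"
    using obtain_small_orthogonal[of "D - dir_width C y0" f y0] \<open>dir_width C y0 < D\<close> by auto
  define C' where "C' = segment_sweep C e"
  have "C \<subset> C'" unfolding C'_def using segment_sweep_superset segment_sweep_neq[OF cC(1) bC(2) e(1)]
    by blast
  have "convex_body C'" unfolding convex_body_def C'_def
    using cC interior_mono[OF segment_sweep_superset, of C e]
      compact_segment_sweep convex_segment_sweep
    by auto
  moreover have "lattice_diam L C' = lattice_diam L C"
  proof (rule antisym)
    have "y0 \<bullet> v = 0" using y0(4) s by simp
    then show "lattice_diam L C' \<le> lattice_diam L C" unfolding C'_def D_def[symmetric]
      using e(3) \<open>\<mu> \<le> D\<close>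
      by (intro lattice_diam_segment_sweep_le[OF L C v y0(1,2) _ f(2,1) e(2)]) auto
    show "lattice_diam L C \<le> lattice_diam L C'"
      using \<open>C \<subset> C'\<close> \<open>convex_body C'\<close> convex_body_bounded_nonempty
      by (intro lattice_diam_mono[OF L cC(3)]) auto
  qed
  ultimately show ?thesis using \<open>C \<subset> C'\<close> unfolding lattice_complete_def by blast
qed

theorem proposition5p1:
  fixes L C :: "(real^2) set"
  assumes "is_lattice L"
    and "convex_body C"
    and "lattice_reduced L C \<or> lattice_complete L C"
  shows "lattice_diam L C \<le> lattice_width L C"
proof (rule ccontr)
  assume "\<not> lattice_diam L C \<le> lattice_width L C"
  then have "lattice_width L C < lattice_diam L C" by simp
  then show False
    using assms(3) not_lattice_reduced_if_width_lt_diam[OF assms(1,2)]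
      not_lattice_complete_if_width_lt_diam[OF assms(1,2)]
    by blast
qed

end
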